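(* Let $$C=\begin{bmatrix}0&-\frac{1+i}{4}&-\frac14&0\\0&0&\frac14&\frac{-1+i}{4}\\0&0&0&\frac14\\0&0&0&0\end{bmatrix}.$$ Then $C$ is nilpotent with $\|C\|<1$, $P_C(x,y)=1-\frac{7}{16}xy+\frac{1}{32}x^2y^2$ (so $C$ has the Circularity property), but $Q_C(x,y)\notin\mathbb{C}[xy]$; hence the associated partial isometry $\mathcal{A}(C)$ does not have the Circularity property.
   Context: $P_C(x,y)=\det(I-xC-yC^* )$, $Q_C(x,y)=\det(I-xC-yC^*-xy(I-C^*C))$; $\mathbb{C}[xy]$ is the set of polynomials in the product $xy$ alone. $H_X(\theta)=\frac12(e^{-i\theta}X+e^{i\theta}X^* )$; $X$ has the Circularity property if the spectrum of $H_X(\theta)$ is independent of $\theta$. For a contraction $C\in M_n$: $D_C=I-C^*C$, $d=\operatorname{rank}D_C$, $B_C$ is a $d\times n$ matrix of full row rank with $B_C^*B_C=D_C$, and $\mathcal{A}(C)=\begin{bmatrix}0&B_C\\0&C\end{bmatrix}$. *)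

theory Defs
  imports "Jordan_Normal_Form.Schur_Decomposition" "Jordan_Normal_Form.Char_Poly"
          "Jordan_Normal_Form.DL_Rank"
begin

definition vnorm :: "complex vec \<Rightarrow> real" where
  "vnorm v = sqrt (\<Sum>i<dim_vec v. (cmod (v $ i))^2)"

definition op_norm :: "complex mat \<Rightarrow> real" where
  "op_norm A = Sup {vnorm (A *\<^sub>v v) | v. v \<in> carrier_vec (dim_col A) \<and> vnorm v \<le> 1}"

definition nilpotent_mat :: "complex mat \<Rightarrow> bool" where
  "nilpotent_mat A \<longleftrightarrow> (\<exists>k. A ^\<^sub>m k = 0\<^sub>m (dim_row A) (dim_col A))"

definition P_pol :: "complex mat \<Rightarrow> complex \<Rightarrow> complex \<Rightarrow> complex" where
  "P_pol C x y = det (1\<^sub>m (dim_row C) - x \<cdot>\<^sub>m C - y \<cdot>\<^sub>m mat_adjoint C)"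

definition Q_pol :: "complex mat \<Rightarrow> complex \<Rightarrow> complex \<Rightarrow> complex" where
  "Q_pol C x y = det (1\<^sub>m (dim_row C) - x \<cdot>\<^sub>m C - y \<cdot>\<^sub>m mat_adjoint C
      - (x * y) \<cdot>\<^sub>m (1\<^sub>m (dim_row C) - mat_adjoint C * C))"

definition in_Cxy :: "(complex \<Rightarrow> complex \<Rightarrow> complex) \<Rightarrow> bool" where
  "in_Cxy f \<longleftrightarrow> (\<exists>p :: complex poly. \<forall>x y. f x y = poly p (x * y))"

definition H_mat :: "complex mat \<Rightarrow> real \<Rightarrow> complex mat" where
  "H_mat X \<theta> = (1/2 :: complex) \<cdot>\<^sub>m (exp (- \<i> * of_real \<theta>) \<cdot>\<^sub>m X + exp (\<i> * of_real \<theta>) \<cdot>\<^sub>m mat_adjoint X)"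

definition spectrum_ms :: "complex mat \<Rightarrow> complex multiset" where
  "spectrum_ms A = proots (char_poly A)"

definition circularity :: "complex mat \<Rightarrow> bool" where
  "circularity X \<longleftrightarrow> (\<forall>\<theta> \<theta>'. spectrum_ms (H_mat X \<theta>) = spectrum_ms (H_mat X \<theta>'))"

definition D_mat :: "complex mat \<Rightarrow> complex mat" where
  "D_mat C = 1\<^sub>m (dim_col C) - mat_adjoint C * C"

definition mat_rank :: "complex mat \<Rightarrow> nat" where
  "mat_rank A = vec_space.rank (dim_row A) A"

definition is_B_C :: "complex mat \<Rightarrow> complex mat \<Rightarrow> bool" where
  "is_B_C C B \<longleftrightarrow> (let n = dim_col C; d = mat_rank (D_mat C) in
     B \<in> carrier_mat d n \<and> mat_rank B = d \<and> mat_adjoint B * B = D_mat C)"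

definition A_mat :: "complex mat \<Rightarrow> complex mat \<Rightarrow> complex mat" where
  "A_mat C B = four_block_mat (0\<^sub>m (dim_row B) (dim_row B)) B (0\<^sub>m (dim_row C) (dim_row B)) C"

definition C12 :: "complex mat" where
  "C12 = mat_of_rows_list 4
    [[0, - (1 + \<i>) / 4, - 1/4, 0],
     [0, 0, 1/4, (- 1 + \<i>) / 4],
     [0, 0, 0, 1/4],
     [0, 0, 0, 0]]"

end

theory Submission
  imports Defs "HOL-Analysis.Convex"
begin

text \<open>
  For t \<noteq> 0 the characteristic polynomial of H_X(\<theta>) at t equals
  t^n P_X(e^{-i\<theta>}/2t, e^{i\<theta>}/2t), and the product of these two arguments does not
  depend on \<theta>. Hence P_X \<in> C[xy] forces circularity, while conversely circularity forces
  P_X(e^{-i\<theta>}, e^{i\<theta>}) = P_X(1,1) (take t = 1/2), in particular P_X(-1,-1) = P_X(1,1).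
  In the block matrix A(C) the Schur complement of the identity block shows P_A(C) = Q_C as soon
  as B_C^* B_C = I - C^* C; for the given C, however, Q_C(1,1) = 67/2048 and Q_C(-1,-1) = 59/2048.
  Nilpotency holds because C is strictly upper triangular, and the operator norm is bounded by
  the Frobenius norm sqrt(7/16).
\<close>

lemma dim_mat_adjoint [simp]:
  "dim_row (mat_adjoint A) = dim_col A" "dim_col (mat_adjoint A) = dim_row A"
  by (simp_all add: mat_adjoint_def)

lemma index_mat_adjoint [simp]:
  fixes A :: "complex mat"
  shows "i < dim_col A \<Longrightarrow> j < dim_row A \<Longrightarrow> mat_adjoint A $$ (i, j) = cnj (A $$ (j, i))"
  unfolding mat_adjoint_def by (subst mat_of_rows_index) simp_all

lemma mat_adjoint_carrier: "A \<in> carrier_mat n m \<Longrightarrow> mat_adjoint A \<in> carrier_mat m n"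
  unfolding carrier_mat_def by simp

lemma det_expand_first_column:
  assumes "A \<in> carrier_mat n n" "0 < n"
  shows "det A = (\<Sum>i<n. (- 1) ^ i * A $$ (i, 0) * det (mat_delete A i 0))"
  using laplace_expansion_column[OF assms] by (simp add: cofactor_def mult_ac)

lemma index_mat_delete:
  "i' < dim_row A - 1 \<Longrightarrow> j' < dim_col A - 1 \<Longrightarrow>
    mat_delete A i j $$ (i', j') = A $$ (insert_index i i', insert_index j j')"
  by (simp add: mat_delete_def)

lemma det_1x1:
  assumes A: "A \<in> carrier_mat 1 1"
  shows "det A = A $$ (0, 0)"
proof -
  have "mat_delete A 0 0 \<in> carrier_mat 0 0"
    using mat_delete_carrier[OF A] by simp
  then show ?thesis
    by (simp add: det_expand_first_column[OF A])
qed

lemma det_2x2: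
  assumes A: "A \<in> carrier_mat 2 2"
  shows "det A = A $$ (0,0) * A $$ (1,1) - A $$ (0,1) * A $$ (1,0)"
proof -
  have "mat_delete A i 0 \<in> carrier_mat 1 1" for i
    using mat_delete_carrier[OF A] by simp
  then show ?thesis
    using A by (simp add: det_expand_first_column[OF A] det_1x1 index_mat_delete eval_nat_numeral)
qed

lemma det_3x3:
  assumes A: "A \<in> carrier_mat 3 3"
  shows "det A = A $$ (0,0) * A $$ (1,1) * A $$ (2,2) + A $$ (0,1) * A $$ (1,2) * A $$ (2,0)
    + A $$ (0,2) * A $$ (1,0) * A $$ (2,1) - A $$ (0,2) * A $$ (1,1) * A $$ (2,0)
    - A $$ (0,0) * A $$ (1,2) * A $$ (2,1) - A $$ (0,1) * A $$ (1,0) * A $$ (2,2)"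
proof -
  have "mat_delete A i 0 \<in> carrier_mat 2 2" for i
    using mat_delete_carrier[OF A] by simp
  then show ?thesis
    using A by (simp add: det_expand_first_column[OF A] det_2x2 index_mat_delete eval_nat_numeral
        algebra_simps)
qed

lemma det_four_block_mat_one_upper_left:
  fixes B :: "'a :: idom mat"
  assumes B: "B \<in> carrier_mat d n" and C: "C \<in> carrier_mat n d" and D: "D \<in> carrier_mat n n"
  shows "det (four_block_mat (1\<^sub>m d) B C D) = det (D - C * B)"
proof -
  have CB: "C * B \<in> carrier_mat n n" using B C by simp
  have DCB: "D - C * B \<in> carrier_mat n n" using CB by (rule minus_carrier_mat)
  have "C * B + (D - C * B) = D"
    by (rule eq_matI) (use B C D in auto)
  then have factor: "four_block_mat (1\<^sub>m d) B C D
      = four_block_mat (1\<^sub>m d) (0\<^sub>m d n) C (1\<^sub>m n) * four_block_mat (1\<^sub>m d) B (0\<^sub>m n d) (D - C * B)"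
    using B C DCB by (simp add: mult_four_block_mat[OF one_carrier_mat zero_carrier_mat C
        one_carrier_mat one_carrier_mat B zero_carrier_mat DCB])
  show ?thesis
    unfolding factor
    by (subst det_mult[of _ "d + n"])
      (use B C DCB in \<open>auto simp: det_four_block_mat_upper_right_zero[of _ d _ n]
        det_four_block_mat_lower_left_zero[of _ d _ n]\<close>)
qed

lemma pow_strictly_upper_triangular_index:
  assumes A: "A \<in> carrier_mat n n" and strict: "\<And>i j. i < n \<Longrightarrow> j \<le> i \<Longrightarrow> A $$ (i, j) = 0"
    and "i < n" "j < n" "j < i + k"
  shows "(A ^\<^sub>m k) $$ (i, j) = 0"
  using assms(3-)
proof (induction k arbitrary: j)
  case (Suc k)
  have "(A ^\<^sub>m k * A) $$ (i, j) = (\<Sum>l<n. (A ^\<^sub>m k) $$ (i, l) * A $$ (l, j))"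
    using A Suc.prems by (simp add: scalar_prod_def lessThan_atLeast0)
  also have "\<dots> = 0"
  proof (intro sum.neutral ballI)
    fix l assume "l \<in> {..<n}"
    then show "(A ^\<^sub>m k) $$ (i, l) * A $$ (l, j) = 0"
      using Suc strict[of l j] by (cases "l < i + k") auto
  qed
  finally show ?case by simp
qed (use A in simp)

lemma nilpotent_mat_if_strictly_upper_triangular:
  assumes A: "A \<in> carrier_mat n n" and strict: "\<And>i j. i < n \<Longrightarrow> j \<le> i \<Longrightarrow> A $$ (i, j) = 0"
  shows "nilpotent_mat A"
  unfolding nilpotent_mat_def
proof (intro exI[of _ n] eq_matI)
  fix i j assume "i < dim_row (0\<^sub>m (dim_row A) (dim_col A) :: complex mat)"
    "j < dim_col (0\<^sub>m (dim_row A) (dim_col A) :: complex mat)"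
  then show "(A ^\<^sub>m n) $$ (i, j) = 0\<^sub>m (dim_row A) (dim_col A) $$ (i, j)"
    using A pow_strictly_upper_triangular_index[OF A strict, of i j n] by simp
qed (use A in simp_all)

definition frobenius_norm :: "complex mat \<Rightarrow> real" where
  "frobenius_norm A = sqrt (\<Sum>i<dim_row A. \<Sum>j<dim_col A. (cmod (A $$ (i, j)))\<^sup>2)"

lemma cmod_sum_mult_squared_le:
  "(cmod (\<Sum>j\<in>J. a j * b j))\<^sup>2 \<le> (\<Sum>j\<in>J. (cmod (a j))\<^sup>2) * (\<Sum>j\<in>J. (cmod (b j))\<^sup>2)"
proof -
  have "cmod (\<Sum>j\<in>J. a j * b j) \<le> (\<Sum>j\<in>J. cmod (a j) * cmod (b j))"
    by (rule order_trans[OF norm_sum]) (simp add: norm_mult)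
  then have "(cmod (\<Sum>j\<in>J. a j * b j))\<^sup>2 \<le> (\<Sum>j\<in>J. cmod (a j) * cmod (b j))\<^sup>2"
    by (simp add: power_mono)
  also have "\<dots> \<le> (\<Sum>j\<in>J. (cmod (a j))\<^sup>2) * (\<Sum>j\<in>J. (cmod (b j))\<^sup>2)"
    by (rule Cauchy_Schwarz_ineq_sum)
  finally show ?thesis .
qed

lemma vnorm_mult_mat_vec_le:
  assumes "v \<in> carrier_vec (dim_col A)"
  shows "vnorm (A *\<^sub>v v) \<le> frobenius_norm A * vnorm v"
proof -
  let ?V = "\<Sum>j<dim_col A. (cmod (v $ j))\<^sup>2"
  have "(\<Sum>i<dim_row A. (cmod ((A *\<^sub>v v) $ i))\<^sup>2)
      \<le> (\<Sum>i<dim_row A. (\<Sum>j<dim_col A. (cmod (A $$ (i, j)))\<^sup>2) * ?V)"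
    using assms by (intro sum_mono)
      (simp add: scalar_prod_def atLeast0LessThan cmod_sum_mult_squared_le)
  then have "vnorm (A *\<^sub>v v) \<le> sqrt ((\<Sum>i<dim_row A. \<Sum>j<dim_col A. (cmod (A $$ (i, j)))\<^sup>2) * ?V)"
    by (simp add: vnorm_def sum_distrib_right)
  then show ?thesis
    using assms by (simp add: frobenius_norm_def vnorm_def real_sqrt_mult)
qed

lemma op_norm_le_frobenius_norm: "op_norm A \<le> frobenius_norm A"
  unfolding op_norm_def
proof (rule cSup_least)
  show "{vnorm (A *\<^sub>v v) |v. v \<in> carrier_vec (dim_col A) \<and> vnorm v \<le> 1} \<noteq> {}"
    by (auto intro!: exI[of _ "0\<^sub>v (dim_col A)"] simp: vnorm_def)
  have "frobenius_norm A \<ge> 0"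
    by (simp add: frobenius_norm_def sum_nonneg)
  then show "x \<le> frobenius_norm A"
    if "x \<in> {vnorm (A *\<^sub>v v) |v. v \<in> carrier_vec (dim_col A) \<and> vnorm v \<le> 1}" for x
    using that vnorm_mult_mat_vec_le mult_left_le[of _ "frobenius_norm A"] by (force intro: order_trans)
qed

lemma char_poly_eq_prod_spectrum_ms:
  assumes "A \<in> carrier_mat n n"
  shows "char_poly A = (\<Prod>a\<in>#spectrum_ms A. [:- a, 1:])"
proof -
  have "lead_coeff (char_poly A) = 1"
    using degree_monic_char_poly[OF assms] by simp
  then show ?thesis
    using complex_poly_decompose_multiset[of "char_poly A"] by (simp add: spectrum_ms_def)
qed

lemma H_mat_carrier: "X \<in> carrier_mat n n \<Longrightarrow> H_mat X \<theta> \<in> carrier_mat n n"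
  unfolding H_mat_def using mat_adjoint_carrier[of X n n] by simp

lemma circularity_iff_char_poly_H_mat:
  assumes X: "X \<in> carrier_mat n n"
  shows "circularity X \<longleftrightarrow> (\<forall>\<theta>. char_poly (H_mat X \<theta>) = char_poly (H_mat X 0))"
  unfolding circularity_def
  by (metis X H_mat_carrier char_poly_eq_prod_spectrum_ms spectrum_ms_def)

lemma poly_char_poly_H_mat:
  assumes X: "X \<in> carrier_mat n n" and "t \<noteq> 0"
  shows "poly (char_poly (H_mat X \<theta>)) t
    = t ^ n * P_pol X (exp (- \<i> * of_real \<theta>) / (2 * t)) (exp (\<i> * of_real \<theta>) / (2 * t))"
proof -
  have "- char_matrix (H_mat X \<theta>) t = t \<cdot>\<^sub>m (1\<^sub>m n - (exp (- \<i> * of_real \<theta>) / (2 * t)) \<cdot>\<^sub>m X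
      - (exp (\<i> * of_real \<theta>) / (2 * t)) \<cdot>\<^sub>m mat_adjoint X)"
    by (rule eq_matI) (use X \<open>t \<noteq> 0\<close> in \<open>auto simp: char_matrix_def H_mat_def field_simps\<close>)
  then show ?thesis
    using X by (simp add: char_poly_matrix[OF H_mat_carrier[OF X]] P_pol_def)
qed

lemma poly_eq_if_eq_on_nonzero:
  fixes p q :: "'a :: {idom, ring_char_0} poly"
  assumes "\<And>t. t \<noteq> 0 \<Longrightarrow> poly p t = poly q t"
  shows "p = q"
proof (rule ccontr)
  assume "p \<noteq> q"
  then have "finite {t. poly (p - q) t = 0}"
    by (intro poly_roots_finite) simp
  moreover have "UNIV - {0} \<subseteq> {t. poly (p - q) t = 0}"
    using assms by auto
  ultimately have "finite (UNIV - {0 :: 'a})"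
    by (rule finite_subset[rotated])
  then show False
    by (simp add: infinite_UNIV_char_0)
qed

lemma circularity_if_P_pol_in_Cxy:
  assumes X: "X \<in> carrier_mat n n" and "in_Cxy (P_pol X)"
  shows "circularity X"
proof -
  obtain p where p: "\<And>x y. P_pol X x y = poly p (x * y)"
    using assms(2) unfolding in_Cxy_def by blast
  have "poly (char_poly (H_mat X \<theta>)) t = t ^ n * poly p (1 / (4 * t\<^sup>2))" if "t \<noteq> 0" for \<theta> t
  proof -
    have "exp (- \<i> * of_real \<theta>) / (2 * t) * (exp (\<i> * of_real \<theta>) / (2 * t)) = 1 / (4 * t\<^sup>2)"
      using that by (simp add: field_simps power2_eq_square flip: exp_add)
    then show ?thesis
      by (simp add: poly_char_poly_H_mat[OF X that] p)
  qed
  then have "char_poly (H_mat X \<theta>) = char_poly (H_mat X 0)" for \<theta>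
    by (intro poly_eq_if_eq_on_nonzero) simp
  then show ?thesis
    using circularity_iff_char_poly_H_mat[OF X] by blast
qed

lemma P_pol_exp_eq_if_circularity:
  assumes X: "X \<in> carrier_mat n n" and "circularity X"
  shows "P_pol X (exp (- \<i> * of_real \<theta>)) (exp (\<i> * of_real \<theta>)) = P_pol X 1 1"
proof -
  have "char_poly (H_mat X \<theta>) = char_poly (H_mat X 0)"
    using assms circularity_iff_char_poly_H_mat by blast
  then have "poly (char_poly (H_mat X \<theta>)) (1 / 2) = poly (char_poly (H_mat X 0)) (1 / 2)"
    by simp
  then show ?thesis
    by (simp add: poly_char_poly_H_mat[OF X])
qed

lemma P_pol_minus_one_if_circularity:
  assumes "X \<in> carrier_mat n n" "circularity X"
  shows "P_pol X (- 1) (- 1) = P_pol X 1 1"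
proof -
  have "exp (- \<i> * of_real pi) = - 1" "exp (\<i> * of_real pi) = - 1"
    by (simp_all add: exp_minus mult.commute)
  then show ?thesis
    using P_pol_exp_eq_if_circularity[OF assms, of pi] by simp
qed

lemma not_in_Cxy_if_neq:
  assumes "f (- 1) (- 1) \<noteq> f 1 1"
  shows "\<not> in_Cxy f"
proof
  assume "in_Cxy f"
  then obtain p where "\<And>x y. f x y = poly p (x * y)"
    unfolding in_Cxy_def by blast
  then have "f (- 1) (- 1) = f 1 1"
    by simp
  with assms show False ..
qed

lemma A_mat_carrier:
  "C \<in> carrier_mat n n \<Longrightarrow> B \<in> carrier_mat d n \<Longrightarrow> A_mat C B \<in> carrier_mat (d + n) (d + n)"
  unfolding A_mat_def by (rule four_block_carrier_mat) auto

lemma P_pol_A_mat: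
  assumes C: "C \<in> carrier_mat n n" and B: "B \<in> carrier_mat d n"
    and BB: "mat_adjoint B * B = 1\<^sub>m n - mat_adjoint C * C"
  shows "P_pol (A_mat C B) x y = Q_pol C x y"
proof -
  have block: "1\<^sub>m (d + n) - x \<cdot>\<^sub>m A_mat C B - y \<cdot>\<^sub>m mat_adjoint (A_mat C B)
      = four_block_mat (1\<^sub>m d) ((- x) \<cdot>\<^sub>m B) ((- y) \<cdot>\<^sub>m mat_adjoint B) (1\<^sub>m n - x \<cdot>\<^sub>m C - y \<cdot>\<^sub>m mat_adjoint C)"
    by (rule eq_matI) (use B C in \<open>auto simp: A_mat_def\<close>)
  have Bs: "mat_adjoint B \<in> carrier_mat n d"
    using B by (rule mat_adjoint_carrier)
  have "((- y) \<cdot>\<^sub>m mat_adjoint B) * ((- x) \<cdot>\<^sub>m B) = (- y) \<cdot>\<^sub>m ((- x) \<cdot>\<^sub>m (mat_adjoint B * B))"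
    by (simp add: mult_smult_assoc_mat[OF Bs smult_carrier_mat[OF B]] mult_smult_distrib[OF Bs B])
  also have "\<dots> = (x * y) \<cdot>\<^sub>m (mat_adjoint B * B)"
    by (rule eq_matI) auto
  finally have "((- y) \<cdot>\<^sub>m mat_adjoint B) * ((- x) \<cdot>\<^sub>m B) = (x * y) \<cdot>\<^sub>m (mat_adjoint B * B)" .
  moreover have "dim_row (A_mat C B) = d + n"
    using A_mat_carrier[OF C B] by simp
  moreover have "1\<^sub>m n - x \<cdot>\<^sub>m C - y \<cdot>\<^sub>m mat_adjoint C \<in> carrier_mat n n"
    by (intro minus_carrier_mat smult_carrier_mat mat_adjoint_carrier C)
  ultimately show ?thesis
    using C by (simp add: P_pol_def Q_pol_def block BB
        det_four_block_mat_one_upper_left[OF smult_carrier_mat[OF B] smult_carrier_mat[OF Bs]])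
qed

lemma C12_carrier: "C12 \<in> carrier_mat 4 4"
  by (rule carrier_matI) (simp_all add: C12_def mat_of_rows_list_def)

lemma dim_C12 [simp]: "dim_row C12 = 4" "dim_col C12 = 4"
  using C12_carrier by auto

lemma index_C12:
  "i < 4 \<Longrightarrow> j < 4 \<Longrightarrow> C12 $$ (i, j) =
    [[0, - (1 + \<i>) / 4, - 1/4, 0],
     [0, 0, 1/4, (- 1 + \<i>) / 4],
     [0, 0, 0, 1/4],
     [0, 0, 0, 0]] ! i ! j"
  by (simp add: C12_def mat_of_rows_list_def)

lemma P_pol_C12: "P_pol C12 x y = 1 - 7/16 * x * y + 1/32 * x^2 * y^2"
proof -
  let ?M = "1\<^sub>m 4 - x \<cdot>\<^sub>m C12 - y \<cdot>\<^sub>m mat_adjoint C12"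
  have M: "?M \<in> carrier_mat 4 4"
    by (intro minus_carrier_mat smult_carrier_mat mat_adjoint_carrier C12_carrier)
  have "mat_delete ?M i 0 \<in> carrier_mat 3 3" for i
    using mat_delete_carrier[OF M] by simp
  then show ?thesis
    unfolding P_pol_def dim_C12 det_expand_first_column[OF M zero_less_numeral]
    by (simp add: det_3x3 index_mat_delete insert_index_def eval_nat_numeral index_C12)
      (simp add: field_simps power2_eq_square)
qed

lemma Q_pol_C12:
  "Q_pol C12 x y = 1 - 4 * x * y + 89/16 * x^2 * y^2 - 201/64 * x^3 * y^3 + 1247/2048 * x^4 * y^4
    + (1 - \<i>) / 1024 * x^3 * y^4 + (1 + \<i>) / 1024 * x^4 * y^3"
proof -
  let ?M = "1\<^sub>m 4 - x \<cdot>\<^sub>m C12 - y \<cdot>\<^sub>m mat_adjoint C12 - (x * y) \<cdot>\<^sub>m (1\<^sub>m 4 - mat_adjoint C12 * C12)"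
  have M: "?M \<in> carrier_mat 4 4"
    using mult_carrier_mat[OF mat_adjoint_carrier[OF C12_carrier] C12_carrier]
    by (intro minus_carrier_mat smult_carrier_mat)
  have "mat_delete ?M i 0 \<in> carrier_mat 3 3" for i
    using mat_delete_carrier[OF M] by simp
  then show ?thesis
    unfolding Q_pol_def dim_C12 det_expand_first_column[OF M zero_less_numeral]
    by (simp add: det_3x3 index_mat_delete insert_index_def eval_nat_numeral index_C12
        scalar_prod_def atLeast0LessThan lessThan_Suc)
      (simp add: field_simps power2_eq_square power3_eq_cube power4_eq_xxxx)
qed

lemma C12_strictly_upper_triangular: "i < 4 \<Longrightarrow> j \<le> i \<Longrightarrow> C12 $$ (i, j) = 0"
  by (auto simp: index_C12 numeral_eq_Suc less_Suc_eq le_Suc_eq)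

lemma frobenius_norm_C12: "frobenius_norm C12 = sqrt (7/16)"
  by (simp add: frobenius_norm_def index_C12 eval_nat_numeral lessThan_Suc cmod_def)

lemma P_pol_C12_in_Cxy: "in_Cxy (P_pol C12)"
  unfolding in_Cxy_def
  by (rule exI[of _ "[:1, - 7/16, 1/32:]"]) (simp add: P_pol_C12 algebra_simps power2_eq_square)

lemma A_mat_C12_not_circularity:
  assumes "is_B_C C12 B"
  shows "\<not> circularity (A_mat C12 B)"
proof
  assume circ: "circularity (A_mat C12 B)"
  obtain d where B: "B \<in> carrier_mat d 4" and BB: "mat_adjoint B * B = 1\<^sub>m 4 - mat_adjoint C12 * C12"
    using assms unfolding is_B_C_def D_mat_def Let_def by auto
  have "Q_pol C12 (- 1) (- 1) = Q_pol C12 1 1"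
    using P_pol_minus_one_if_circularity[OF A_mat_carrier[OF C12_carrier B] circ]
    by (simp add: P_pol_A_mat[OF C12_carrier B BB])
  then show False
    by (simp add: Q_pol_C12 field_simps)
qed

theorem mainTheorem12:
  shows "nilpotent_mat C12 \<and> op_norm C12 < 1
    \<and> (\<forall>x y. P_pol C12 x y = 1 - 7/16 * x * y + 1/32 * x^2 * y^2)
    \<and> circularity C12
    \<and> \<not> in_Cxy (Q_pol C12)
    \<and> (\<forall>B. is_B_C C12 B \<longrightarrow> \<not> circularity (A_mat C12 B))"
proof (intro conjI allI impI)
  show "nilpotent_mat C12"
    using nilpotent_mat_if_strictly_upper_triangular[OF C12_carrier] C12_strictly_upper_triangular
    by blast
  show "op_norm C12 < 1"
    by (rule le_less_trans[OF op_norm_le_frobenius_norm]) (simp add: frobenius_norm_C12)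
  show "circularity C12"
    by (rule circularity_if_P_pol_in_Cxy[OF C12_carrier P_pol_C12_in_Cxy])
  show "P_pol C12 x y = 1 - 7/16 * x * y + 1/32 * x^2 * y^2" for x y
    by (rule P_pol_C12)
  show "\<not> in_Cxy (Q_pol C12)"
    by (rule not_in_Cxy_if_neq) (simp add: Q_pol_C12 field_simps)
  show "\<not> circularity (A_mat C12 B)" if "is_B_C C12 B" for B
    using that by (rule A_mat_C12_not_circularity)
qed

end
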